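(* Let $f(x)=\frac12x^\top Ax-b^\top x$ on $\mathbb{R}^n$, where $A$ is symmetric positive definite with $\mu I\preceq A\preceq LI$, $0<\mu\le L$, and $b\in\mathbb{R}^n$. Consider the SR1 iteration: choose $x_0$, set $G_0=L\cdot I$, and for $k=0,1,\dots$ set $x_{k+1}=x_k-G_k^{-1}\nabla f(x_k)$, $u_k=x_{k+1}-x_k$, $G_{k+1}=\mathrm{SR1}(A,G_k,u_k)$. Then for all $k\ge1$, $$\lambda_f(x_k)\le\left(e^{\frac{n}{k}\ln\frac{L}{\mu}}-1\right)^{k/2}\sqrt{\frac{L}{\mu}}\cdot\lambda_f(x_0).$$
   Context: $\lambda_f(x)=\sqrt{\nabla f(x)^\top A^{-1}\nabla f(x)}$. For symmetric matrices $A,G$ and $u\neq0$, $\mathrm{SR1}(A,G,u)=G$ if $(G-A)u=0$, and otherwise $\mathrm{SR1}(A,G,u)=G-\frac{(G-A)uu^\top(G-A)}{u^\top(G-A)u}$. *)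

theory Defs
  imports "HOL-Analysis.Analysis"
begin

definition quad_f :: "real^'n^'n \<Rightarrow> real^'n \<Rightarrow> real^'n \<Rightarrow> real" where
  "quad_f A b x = (1/2) * (x \<bullet> (A *v x)) - b \<bullet> x"

definition quad_grad :: "real^'n^'n \<Rightarrow> real^'n \<Rightarrow> real^'n \<Rightarrow> real^'n" where
  "quad_grad A b x = A *v x - b"

definition lambda_f :: "real^'n^'n \<Rightarrow> real^'n \<Rightarrow> real^'n \<Rightarrow> real" where
  "lambda_f A b x = sqrt (quad_grad A b x \<bullet> (matrix_inv A *v quad_grad A b x))"

definition outer :: "real^'n \<Rightarrow> real^'n \<Rightarrow> real^'n^'n" where
  "outer v w = (\<chi> i j. v $ i * w $ j)"

definition SR1 :: "real^'n^'n \<Rightarrow> real^'n^'n \<Rightarrow> real^'n \<Rightarrow> real^'n^'n" where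
  "SR1 A G u = (if (G - A) *v u = 0 then G
     else G - (1 / (u \<bullet> ((G - A) *v u))) *\<^sub>R outer ((G - A) *v u) ((G - A) *v u))"

primrec sr1_iter :: "real^'n^'n \<Rightarrow> real^'n \<Rightarrow> real \<Rightarrow> real^'n \<Rightarrow> nat \<Rightarrow> (real^'n) \<times> (real^'n^'n)" where
  "sr1_iter A b L x0 0 = (x0, L *\<^sub>R mat 1)"
| "sr1_iter A b L x0 (Suc k) =
     (let (x, G) = sr1_iter A b L x0 k;
          x' = x - matrix_inv G *v quad_grad A b x
      in (x', SR1 A G (x' - x)))"

end

theory Submission
  imports Defs
begin

(* Along the SR1 iteration the matrices G_k stay symmetric with A <= G_k <= L I. The update makes
  G_(k+1) - A vanish on the step u_k without shrinking the kernel of G_k - A, and the new gradient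
  is g_(k+1) = -(G_k - A) u_k; so every step with nonzero gradient enlarges that kernel, and the
  gradient vanishes after at most n steps.
  By the Sherman-Morrison formula, one step multiplies the squared dual norm g_k^T G_k^-1 g_k by a
  factor theta_k <= L (tr G_(k+1)^-1 - tr G_k^-1). Since tr G_k^-1 stays in [n/L, n/mu], the factors
  sum to at most n (L/mu - 1), and for k <= n the AM-GM and Bernoulli inequalities bound their
  product by (exp (n/k ln (L/mu)) - 1)^k. Comparing the dual norms of A, G_0 = L I and G_k costs
  the remaining factor L/mu. *)

lemma inner_matrix_vector_symmetric:
  fixes M :: "real^'n^'n"
  assumes "transpose M = M"
  shows "x \<bullet> (M *v y) = (M *v x) \<bullet> y"
  by (metis assms dot_lmul_matrix transpose_matrix_vector)

lemma outer_mult_vector: "outer v w *v x = (w \<bullet> x) *\<^sub>R v"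
  by (simp add: outer_def vec_eq_iff matrix_vector_mult_def inner_vec_def sum_distrib_left
      mult.commute mult.left_commute)

lemma transpose_outer: "transpose (outer v w) = outer w v"
  by (simp add: outer_def transpose_def vec_eq_iff mult.commute)

lemma transpose_diff: "transpose (M - N) = transpose M - transpose (N :: 'a::ring_1^'n^'m)"
  by (simp add: transpose_def vec_eq_iff)

lemma trace_outer: "trace (outer v w) = v \<bullet> w"
  by (simp add: trace_def outer_def inner_vec_def)

lemma trace_scaleR: "trace (c *\<^sub>R M) = c * trace (M :: real^'n^'n)"
  by (simp add: trace_def sum_distrib_left)

lemma matrix_vector_mult_uminus_right: "M *v (- x) = - (M *v x :: real^'m)"
  by (rule linear_neg[OF matrix_vector_mul_linear])

lemma matrix_inv_mult_vector:
  fixes G :: "real^'n^'n"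
  assumes "invertible G"
  shows "G *v (matrix_inv G *v y) = y" "matrix_inv G *v (G *v y) = y"
proof -
  have "G ** matrix_inv G = mat 1 \<and> matrix_inv G ** G = mat 1"
    using assms unfolding invertible_def matrix_inv_def by (rule someI_ex)
  then show "G *v (matrix_inv G *v y) = y" "matrix_inv G *v (G *v y) = y"
    by (metis matrix_vector_mul_assoc matrix_vector_mul_lid)+
qed

lemma matrix_inv_eqI:
  fixes G H :: "real^'n^'n"
  assumes "invertible G" and "\<And>y. G *v (H *v y) = y"
  shows "matrix_inv G = H"
  unfolding matrix_eq by (metis assms matrix_inv_mult_vector(2))

lemma matrix_inv_symmetric_inner:
  fixes G :: "real^'n^'n"
  assumes "invertible G" and "transpose G = G"
  shows "(matrix_inv G *v x) \<bullet> y = x \<bullet> (matrix_inv G *v y)"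
  by (metis assms inner_matrix_vector_symmetric matrix_inv_mult_vector(1))

lemma invertible_if_pos_def:
  fixes G :: "real^'n^'n"
  assumes "\<And>v. v \<noteq> 0 \<Longrightarrow> 0 < v \<bullet> (G *v v)"
  shows "invertible G"
proof -
  have "\<forall>x. G *v x = 0 \<longrightarrow> x = 0" using assms by fastforce
  then show ?thesis using matrix_left_invertible_ker invertible_left_inverse by blast
qed

lemma invertible_if_ge_pos_def:
  fixes A G :: "real^'n^'n"
  assumes "\<And>v. v \<noteq> 0 \<Longrightarrow> 0 < v \<bullet> (A *v v)" and "\<And>v. v \<bullet> (A *v v) \<le> v \<bullet> (G *v v)"
  shows "invertible G"
  using assms by (intro invertible_if_pos_def) (meson less_le_trans)

lemma psd_Cauchy_Schwarz:
  fixes M :: "real^'n^'n"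
  assumes sym: "transpose M = M" and psd: "\<And>v. 0 \<le> v \<bullet> (M *v v)"
  shows "(x \<bullet> (M *v y))\<^sup>2 \<le> (x \<bullet> (M *v x)) * (y \<bullet> (M *v y))"
proof -
  define X Y B where "X = x \<bullet> (M *v x)" and "Y = y \<bullet> (M *v y)" and "B = x \<bullet> (M *v y)"
  have quadratic_nonneg: "0 \<le> X + 2 * t * B + t\<^sup>2 * Y" for t
  proof -
    have "0 \<le> (x + t *\<^sub>R y) \<bullet> (M *v (x + t *\<^sub>R y))" by (rule psd)
    also have "\<dots> = X + t * B + t * (y \<bullet> (M *v x)) + t\<^sup>2 * Y"
      by (simp add: X_def Y_def B_def algebra_simps power2_eq_square)
    also have "y \<bullet> (M *v x) = B"
      unfolding B_def by (metis sym inner_matrix_vector_symmetric inner_commute)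
    finally show ?thesis by (simp add: algebra_simps)
  qed
  show ?thesis
  proof (cases "Y = 0")
    case True
    have "B = 0"
    proof (rule ccontr)
      assume "B \<noteq> 0"
      have "0 \<le> X + 2 * (-(X + 1) / (2 * B)) * B"
        using quadratic_nonneg[of "-(X + 1) / (2 * B)"] True by simp
      also have "\<dots> = -1" using \<open>B \<noteq> 0\<close> by (simp add: field_simps)
      finally show False by simp
    qed
    then show ?thesis using psd by (simp add: B_def)
  next
    case False
    then have "0 < Y" using psd[of y] by (simp add: Y_def)
    have "0 \<le> X + 2 * (-B / Y) * B + (-B / Y)\<^sup>2 * Y" by (rule quadratic_nonneg)
    also have "\<dots> = X - B\<^sup>2 / Y" using \<open>0 < Y\<close> by (simp add: field_simps power2_eq_square)
    finally show ?thesis using \<open>0 < Y\<close> by (simp add: X_def Y_def B_def field_simps)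
  qed
qed

lemma matrix_inv_quad_le:
  fixes M :: "real^'n^'n"
  assumes "0 < \<mu>" and lower: "\<And>v. \<mu> * (v \<bullet> v) \<le> v \<bullet> (M *v v)"
  shows "e \<bullet> (matrix_inv M *v e) \<le> (e \<bullet> e) / \<mu>"
proof -
  have "invertible M"
    using assms by (intro invertible_if_pos_def) (smt (verit) inner_gt_zero_iff mult_pos_pos)
  define y where "y = matrix_inv M *v e"
  have "M *v y = e" using matrix_inv_mult_vector[OF \<open>invertible M\<close>] by (simp add: y_def)
  then have "\<mu> * norm y ^ 2 \<le> norm y * norm e"
    using lower[of y] norm_cauchy_schwarz[of y e] by (simp add: power2_norm_eq_inner)
  then have "\<mu> * norm y \<le> norm e"
    by (cases "y = 0") (auto simp: power2_eq_square mult.assoc)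
  have "e \<bullet> (matrix_inv M *v e) \<le> norm y * norm e"
    using norm_cauchy_schwarz[of y e] by (simp add: y_def inner_commute)
  also have "\<dots> \<le> norm e ^ 2 / \<mu>"
    using mult_right_mono[OF \<open>\<mu> * norm y \<le> norm e\<close> norm_ge_zero[of e]] \<open>0 < \<mu>\<close>
    by (simp add: pos_le_divide_eq power2_eq_square mult_ac)
  finally show ?thesis by (simp add: power2_norm_eq_inner)
qed

lemma matrix_inv_quad_ge:
  fixes M :: "real^'n^'n"
  assumes sym: "transpose M = M" and psd: "\<And>v. 0 \<le> v \<bullet> (M *v v)"
    and upper: "\<And>v. v \<bullet> (M *v v) \<le> L * (v \<bullet> v)"
    and "invertible M" and "0 < L"
  shows "(e \<bullet> e) / L \<le> e \<bullet> (matrix_inv M *v e)"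
proof -
  define h where "h = matrix_inv M *v e"
  have Mh: "M *v h = e" using matrix_inv_mult_vector[OF \<open>invertible M\<close>] by (simp add: h_def)
  have "(e \<bullet> e)\<^sup>2 = (h \<bullet> (M *v e))\<^sup>2"
    using inner_matrix_vector_symmetric[OF sym, of h e] Mh by (simp add: inner_commute)
  also have "\<dots> \<le> (h \<bullet> e) * (e \<bullet> (M *v e))"
    using psd_Cauchy_Schwarz[OF sym psd, of h e] Mh by simp
  also have "\<dots> \<le> (h \<bullet> e) * (L * (e \<bullet> e))"
    using psd[of h] Mh upper by (intro mult_left_mono) auto
  finally have "(e \<bullet> e) * (e \<bullet> e) \<le> (e \<bullet> e) * (L * (h \<bullet> e))"
    by (simp add: power2_eq_square mult_ac)
  then have "e \<bullet> e \<le> L * (h \<bullet> e)"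
    by (cases "e = 0") (auto simp: mult_le_cancel_left_pos)
  then show ?thesis using \<open>0 < L\<close> by (simp add: h_def divide_le_eq mult.commute inner_commute)
qed

lemma trace_matrix_inv_le:
  fixes M :: "real^'n^'n"
  assumes "0 < \<mu>" and "\<And>v. \<mu> * (v \<bullet> v) \<le> v \<bullet> (M *v v)"
  shows "trace (matrix_inv M) \<le> CARD('n) / \<mu>"
proof -
  have "matrix_inv M $ j $ j \<le> 1 / \<mu>" for j
    using matrix_inv_quad_le[OF assms, of "axis j 1"]
    by (simp add: matrix_vector_mult_basis column_def inner_axis')
  then have "trace (matrix_inv M) \<le> (\<Sum>j\<in>(UNIV::'n set). 1 / \<mu>)"
    unfolding trace_def by (intro sum_mono)
  then show ?thesis by simp
qed

lemma Bernoulli_inequality_powr: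
  fixes x p :: real
  assumes "-1 < x" and "1 \<le> p"
  shows "1 + p * x \<le> (1 + x) powr p"
proof -
  have "p * ((1 + x) - 1) \<le> (1 + x) powr p - 1 powr p"
  proof (rule convex_on_imp_above_tangent[OF powr_convex[OF \<open>1 \<le> p\<close>]])
    show "connected {0::real<..}" by simp
    show "(1::real) \<in> interior {0<..}" by (simp add: interior_open)
    show "1 + x \<in> {0<..}" using \<open>-1 < x\<close> by simp
    have "((\<lambda>z. z powr p) has_real_derivative p * 1 powr (p - 1)) (at 1)"
      by (rule has_real_derivative_powr) simp
    then show "((\<lambda>z. z powr p) has_real_derivative p) (at 1 within {0<..})"
      by (simp add: has_field_derivative_at_within)
  qed
  then show ?thesis by simp
qed

lemma prod_le_arith_mean_power:
  fixes x :: "'a \<Rightarrow> real"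
  assumes "finite S" and "S \<noteq> {}" and nonneg: "\<And>i. i \<in> S \<Longrightarrow> 0 \<le> x i"
  shows "(\<Prod>i\<in>S. x i) \<le> ((\<Sum>i\<in>S. x i) / card S) ^ card S"
proof -
  have "card S \<noteq> 0" using assms by simp
  have "0 \<le> (\<Prod>i\<in>S. x i)" using nonneg by (rule prod_nonneg)
  then have "(\<Prod>i\<in>S. x i) = ((\<Prod>i\<in>S. x i) powr (1 / card S)) ^ card S"
    using \<open>card S \<noteq> 0\<close> by (subst powr_realpow'[symmetric]) (simp_all add: powr_powr)
  also have "\<dots> \<le> ((\<Sum>i\<in>S. x i) / card S) ^ card S"
    using arith_geom_mean[OF assms] by (intro power_mono) (simp_all add: sum_divide_distrib)
  finally show ?thesis .
qed

lemma SR1_mult_vector: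
  fixes A G :: "real^'n^'n" and u :: "real^'n"
  defines "w \<equiv> (G - A) *v u"
  shows "SR1 A G u *v v = G *v v - ((w \<bullet> v) / (u \<bullet> w)) *\<^sub>R w"
  unfolding SR1_def w_def[symmetric]
  by (simp add: matrix_vector_mult_diff_rdistrib outer_mult_vector
      scaleR_matrix_vector_assoc[symmetric])

lemma SR1_quadratic_form:
  fixes A G :: "real^'n^'n" and u :: "real^'n"
  defines "w \<equiv> (G - A) *v u"
  shows "v \<bullet> (SR1 A G u *v v) = v \<bullet> (G *v v) - (w \<bullet> v)\<^sup>2 / (u \<bullet> w)"
  by (simp add: SR1_mult_vector w_def inner_diff_right power2_eq_square inner_commute)

lemma SR1_symmetric:
  fixes A G :: "real^'n^'n"
  assumes "transpose G = G"
  shows "transpose (SR1 A G u) = SR1 A G u"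
  unfolding SR1_def using assms by (simp add: transpose_diff transpose_scalar transpose_outer)

(* The factor theta by which one SR1 step contracts the squared dual norm of the gradient;
  see SR1_inverse_residual. *)
definition sr1_ratio :: "real^'n^'n \<Rightarrow> real^'n^'n \<Rightarrow> real^'n \<Rightarrow> real" where
  "sr1_ratio A G u =
    (let w = (G - A) *v u; a = w \<bullet> (matrix_inv G *v w) in a / (u \<bullet> w - a))"

context
  fixes A G :: "real^'n^'n" and u :: "real^'n"
  assumes symA: "transpose A = A" and symG: "transpose G = G"
    and A_le_G: "\<And>v. v \<bullet> (A *v v) \<le> v \<bullet> (G *v v)"
begin

lemma residual_quadratic_nonneg: "0 \<le> v \<bullet> ((G - A) *v v)"
  using A_le_G[of v] by (simp add: matrix_vector_mult_diff_rdistrib inner_diff_right)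

lemma residual_Cauchy_Schwarz:
  "(((G - A) *v u) \<bullet> v)\<^sup>2 \<le> (u \<bullet> ((G - A) *v u)) * (v \<bullet> ((G - A) *v v))"
proof -
  have sym: "transpose (G - A) = G - A" using symA symG by (simp add: transpose_diff)
  show ?thesis
    using psd_Cauchy_Schwarz[OF sym residual_quadratic_nonneg, of u v]
      inner_matrix_vector_symmetric[OF sym, of v u]
    by (simp add: inner_commute)
qed

lemma SR1_curvature_pos:
  assumes "(G - A) *v u \<noteq> 0"
  shows "0 < u \<bullet> ((G - A) *v u)"
proof -
  let ?w = "(G - A) *v u"
  have "u \<bullet> ?w \<noteq> 0"
  proof
    assume "u \<bullet> ?w = 0"
    then have "(?w \<bullet> ?w)\<^sup>2 \<le> 0" using residual_Cauchy_Schwarz[of ?w] by simp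
    then show False using assms by simp
  qed
  then show ?thesis using residual_quadratic_nonneg[of u] by simp
qed

lemma SR1_le: "v \<bullet> (SR1 A G u *v v) \<le> v \<bullet> (G *v v)"
  using residual_quadratic_nonneg[of u] by (simp add: SR1_quadratic_form)

lemma SR1_ge: "v \<bullet> (A *v v) \<le> v \<bullet> (SR1 A G u *v v)"
proof -
  let ?w = "(G - A) *v u"
  have "(?w \<bullet> v)\<^sup>2 / (u \<bullet> ?w) \<le> v \<bullet> ((G - A) *v v)"
  proof (cases "u \<bullet> ?w = 0")
    case True
    then show ?thesis using residual_quadratic_nonneg by simp
  next
    case False
    then have "0 < u \<bullet> ?w" using residual_quadratic_nonneg[of u] by simp
    then show ?thesis using residual_Cauchy_Schwarz[of v] by (simp add: pos_divide_le_eq mult.commute)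
  qed
  then show ?thesis
    by (simp add: SR1_quadratic_form matrix_vector_mult_diff_rdistrib inner_diff_right)
qed

lemma SR1_secant: "(SR1 A G u - A) *v u = 0"
  using SR1_curvature_pos
  by (cases "(G - A) *v u = 0")
    (simp_all add: SR1_mult_vector matrix_vector_mult_diff_rdistrib inner_commute)

lemma SR1_kernel_mono:
  assumes "(G - A) *v x = 0"
  shows "(SR1 A G u - A) *v x = 0"
proof -
  have "((G - A) *v u) \<bullet> x = u \<bullet> ((G - A) *v x)"
    using symA symG inner_matrix_vector_symmetric[of "G - A" u x] by (simp add: transpose_diff)
  then show ?thesis
    using assms by (simp add: SR1_mult_vector matrix_vector_mult_diff_rdistrib)
qed

context
  assumes A_pos: "\<And>v. v \<noteq> 0 \<Longrightarrow> 0 < v \<bullet> (A *v v)"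
begin

lemma SR1_inverse:
  defines "w \<equiv> (G - A) *v u" and "z \<equiv> matrix_inv G *v ((G - A) *v u)"
  assumes "w \<noteq> 0"
  shows "z \<bullet> w < u \<bullet> w"
    and "matrix_inv (SR1 A G u) = matrix_inv G + (1 / (u \<bullet> w - z \<bullet> w)) *\<^sub>R outer z z"
proof -
  define c a where "c = u \<bullet> w" and "a = z \<bullet> w"
  have "0 < c" using SR1_curvature_pos \<open>w \<noteq> 0\<close> by (simp add: c_def w_def)
  have G_pos: "0 < v \<bullet> (G *v v)" and G'_pos: "0 < v \<bullet> (SR1 A G u *v v)" if "v \<noteq> 0" for v
    using A_pos[OF that] A_le_G[of v] SR1_ge[of v] by linarith+
  have "invertible G" "invertible (SR1 A G u)"
    using invertible_if_ge_pos_def[OF A_pos] A_le_G SR1_ge by blast+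
  have Gz: "G *v z = w"
    using matrix_inv_mult_vector(1)[OF \<open>invertible G\<close>] by (simp add: z_def w_def)
  then have "z \<noteq> 0" using \<open>w \<noteq> 0\<close> by auto
  have "0 < z \<bullet> (SR1 A G u *v z)" using G'_pos[OF \<open>z \<noteq> 0\<close>] .
  also have "\<dots> = a - a\<^sup>2 / c"
    using Gz by (simp add: SR1_quadratic_form w_def[symmetric] a_def c_def inner_commute)
  finally have "0 < a * (c - a) / c" using \<open>0 < c\<close> by (simp add: field_simps power2_eq_square)
  moreover have "0 < a" using G_pos[OF \<open>z \<noteq> 0\<close>] Gz by (simp add: a_def)
  ultimately have "a < c" using \<open>0 < c\<close> by (simp add: zero_less_divide_iff zero_less_mult_iff)
  then show "z \<bullet> w < u \<bullet> w" by (simp add: a_def c_def)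
  show "matrix_inv (SR1 A G u) = matrix_inv G + (1 / (u \<bullet> w - z \<bullet> w)) *\<^sub>R outer z z"
  proof (rule matrix_inv_eqI[OF \<open>invertible (SR1 A G u)\<close>])
    fix y
    have "w \<bullet> (matrix_inv G *v y) = z \<bullet> y"
      using matrix_inv_symmetric_inner[OF \<open>invertible G\<close> symG, of w y] by (simp add: z_def w_def)
    then have "SR1 A G u *v (matrix_inv G *v y) = y - ((z \<bullet> y) / c) *\<^sub>R w"
      using matrix_inv_mult_vector(1)[OF \<open>invertible G\<close>]
      by (simp add: SR1_mult_vector w_def[symmetric] c_def)
    moreover have "SR1 A G u *v z = (1 - a / c) *\<^sub>R w"
      using Gz by (simp add: SR1_mult_vector w_def[symmetric] a_def c_def inner_commute
          scaleR_diff_left)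
    moreover have "(z \<bullet> y) / (c - a) * (1 - a / c) = (z \<bullet> y) / c"
      using \<open>0 < c\<close> \<open>a < c\<close> by (simp add: field_simps)
    ultimately have "SR1 A G u *v (matrix_inv G *v y + ((z \<bullet> y) / (c - a)) *\<^sub>R z) = y"
      by (simp add: matrix_vector_right_distrib matrix_vector_mult_scaleR)
    then show "SR1 A G u *v ((matrix_inv G + (1 / (u \<bullet> w - z \<bullet> w)) *\<^sub>R outer z z) *v y) = y"
      by (simp add: matrix_vector_mult_add_rdistrib scaleR_matrix_vector_assoc[symmetric]
          outer_mult_vector a_def c_def)
  qed
qed

lemma sr1_ratio_nonneg: "0 \<le> sr1_ratio A G u"
proof (cases "(G - A) *v u = 0")
  case False
  define w z where "w = (G - A) *v u" and "z = matrix_inv G *v w"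
  have "0 \<le> z \<bullet> (G *v z)"
    using A_pos[of z] A_le_G[of z] by (cases "z = 0") (auto intro: order_trans less_imp_le)
  moreover have "invertible G"
    by (rule invertible_if_ge_pos_def[OF A_pos A_le_G])
  ultimately have "0 \<le> z \<bullet> w" by (simp add: z_def matrix_inv_mult_vector)
  then show ?thesis
    using SR1_inverse(1) False by (simp add: sr1_ratio_def Let_def w_def z_def inner_commute)
qed (simp add: sr1_ratio_def)

lemma SR1_inverse_residual:
  defines "w \<equiv> (G - A) *v u"
  shows "w \<bullet> (matrix_inv (SR1 A G u) *v w) = sr1_ratio A G u * (u \<bullet> w)"
proof (cases "w = 0")
  case False
  define z c a where "z = matrix_inv G *v w" and "c = u \<bullet> w" and "a = z \<bullet> w"
  have "a < c" using SR1_inverse(1) False by (simp add: w_def z_def a_def c_def)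
  have "matrix_inv (SR1 A G u) *v w = z + (a / (c - a)) *\<^sub>R z"
    using SR1_inverse(2) False
    by (simp add: w_def[symmetric] z_def[symmetric] a_def c_def matrix_vector_mult_add_rdistrib
        scaleR_matrix_vector_assoc[symmetric] outer_mult_vector inner_commute)
  then have "w \<bullet> (matrix_inv (SR1 A G u) *v w) = a + a\<^sup>2 / (c - a)"
    by (simp add: a_def inner_commute inner_add_right power2_eq_square)
  also have "\<dots> = a / (c - a) * c" using \<open>a < c\<close> by (simp add: field_simps power2_eq_square)
  finally show ?thesis
    by (simp add: sr1_ratio_def Let_def w_def[symmetric] z_def a_def c_def inner_commute)
qed simp

lemma sr1_ratio_le_trace:
  assumes G_le: "\<And>v. v \<bullet> (G *v v) \<le> L * (v \<bullet> v)"
  shows "sr1_ratio A G u \<le> L * (trace (matrix_inv (SR1 A G u)) - trace (matrix_inv G))"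
proof (cases "(G - A) *v u = 0")
  case False
  define w z c a where "w = (G - A) *v u" and "z = matrix_inv G *v w"
    and "c = u \<bullet> w" and "a = z \<bullet> w"
  have "a < c" using SR1_inverse(1) False by (simp add: w_def z_def a_def c_def)
  have "invertible G"
    by (rule invertible_if_ge_pos_def[OF A_pos A_le_G])
  then have "a = z \<bullet> (G *v z)" by (simp add: a_def z_def matrix_inv_mult_vector inner_commute)
  then have "a \<le> L * (z \<bullet> z)" using G_le by simp
  moreover have "trace (matrix_inv (SR1 A G u)) - trace (matrix_inv G) = (z \<bullet> z) / (c - a)"
    using SR1_inverse(2) False
    by (simp add: w_def[symmetric] z_def[symmetric] a_def c_def trace_add trace_scaleR trace_outer)
  ultimately show ?thesis
    using \<open>a < c\<close>
    by (simp add: sr1_ratio_def Let_def w_def[symmetric] z_def[symmetric] a_def c_def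
        inner_commute divide_right_mono)
qed (simp add: sr1_ratio_def SR1_def)

end

end

locale sr1_quadratic =
  fixes A :: "real^'n^'n" and b x0 :: "real^'n" and \<mu> L :: real
  assumes symA: "transpose A = A"
    and mu_pos: "0 < \<mu>" and mu_le_L: "\<mu> \<le> L"
    and lower: "\<And>v. \<mu> * (v \<bullet> v) \<le> v \<bullet> (A *v v)"
    and upper: "\<And>v. v \<bullet> (A *v v) \<le> L * (v \<bullet> v)"
begin

definition iter_x :: "nat \<Rightarrow> real^'n" where
  "iter_x k = fst (sr1_iter A b L x0 k)"

definition iter_G :: "nat \<Rightarrow> real^'n^'n" where
  "iter_G k = snd (sr1_iter A b L x0 k)"

definition iter_g :: "nat \<Rightarrow> real^'n" where
  "iter_g k = quad_grad A b (iter_x k)"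

definition iter_u :: "nat \<Rightarrow> real^'n" where
  "iter_u k = - (matrix_inv (iter_G k) *v iter_g k)"

definition iter_ratio :: "nat \<Rightarrow> real" where
  "iter_ratio k = sr1_ratio A (iter_G k) (iter_u k)"

lemma iter_0: "iter_x 0 = x0" "iter_G 0 = L *\<^sub>R mat 1"
  by (simp_all add: iter_x_def iter_G_def)

lemma iter_Suc:
  "iter_x (Suc k) = iter_x k + iter_u k"
  "iter_G (Suc k) = SR1 A (iter_G k) (iter_u k)"
  by (simp_all add: iter_x_def iter_G_def iter_u_def iter_g_def split_def Let_def)

lemma iter_g_Suc: "iter_g (Suc k) = iter_g k + A *v iter_u k"
  by (simp add: iter_g_def iter_Suc quad_grad_def matrix_vector_right_distrib)

lemma L_pos: "0 < L"
  using mu_pos mu_le_L by simp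

lemma A_pos_def: "v \<noteq> 0 \<Longrightarrow> 0 < v \<bullet> (A *v v)"
  using lower[of v] mu_pos by (smt (verit) inner_gt_zero_iff mult_pos_pos)

lemma iter_G_invariant:
  "transpose (iter_G k) = iter_G k \<and> (\<forall>v. v \<bullet> (A *v v) \<le> v \<bullet> (iter_G k *v v))
    \<and> (\<forall>v. v \<bullet> (iter_G k *v v) \<le> L * (v \<bullet> v))"
proof (induction k)
  case 0
  show ?case
    using upper by (simp add: iter_0 transpose_scalar scaleR_matrix_vector_assoc[symmetric])
next
  case (Suc k)
  then have sym: "transpose (iter_G k) = iter_G k"
    and A_le: "\<And>v. v \<bullet> (A *v v) \<le> v \<bullet> (iter_G k *v v)"
    and le_L: "\<And>v. v \<bullet> (iter_G k *v v) \<le> L * (v \<bullet> v)"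
    by blast+
  have "v \<bullet> (SR1 A (iter_G k) (iter_u k) *v v) \<le> L * (v \<bullet> v)" for v
    using SR1_le[OF symA sym A_le, where u = "iter_u k" and v = v] le_L[of v] by linarith
  then show ?case
    using SR1_symmetric[OF sym] SR1_ge[OF symA sym A_le] by (simp add: iter_Suc)
qed

lemma iter_G_symmetric: "transpose (iter_G k) = iter_G k"
  using iter_G_invariant by blast

lemma iter_G_ge_A: "v \<bullet> (A *v v) \<le> v \<bullet> (iter_G k *v v)"
  using iter_G_invariant by blast

lemma iter_G_le_L: "v \<bullet> (iter_G k *v v) \<le> L * (v \<bullet> v)"
  using iter_G_invariant by blast

lemma iter_G_ge_mu: "\<mu> * (v \<bullet> v) \<le> v \<bullet> (iter_G k *v v)"
  using lower iter_G_ge_A order_trans by blast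

lemma iter_G_invertible: "invertible (iter_G k)"
  by (rule invertible_if_ge_pos_def[OF A_pos_def iter_G_ge_A])

lemma iter_g_Suc_residual: "iter_g (Suc k) = - ((iter_G k - A) *v iter_u k)"
proof -
  have "iter_G k *v iter_u k = - iter_g k"
    by (simp add: iter_u_def matrix_vector_mult_uminus_right matrix_inv_mult_vector iter_G_invertible)
  then show ?thesis by (simp add: iter_g_Suc matrix_vector_mult_diff_rdistrib)
qed

lemma iter_ratio_nonneg: "0 \<le> iter_ratio k"
  unfolding iter_ratio_def by (rule sr1_ratio_nonneg[OF symA iter_G_symmetric iter_G_ge_A A_pos_def])

lemma iter_G_norm_Suc_le:
  "iter_g (Suc k) \<bullet> (matrix_inv (iter_G (Suc k)) *v iter_g (Suc k))
    \<le> iter_ratio k * (iter_g k \<bullet> (matrix_inv (iter_G k) *v iter_g k))"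
proof -
  let ?G = "iter_G k" and ?u = "iter_u k"
  have "iter_g (Suc k) \<bullet> (matrix_inv (iter_G (Suc k)) *v iter_g (Suc k))
      = iter_ratio k * (?u \<bullet> ((?G - A) *v ?u))"
    using SR1_inverse_residual[OF symA iter_G_symmetric iter_G_ge_A A_pos_def]
    by (simp add: iter_g_Suc_residual iter_Suc iter_ratio_def matrix_vector_mult_uminus_right)
  also have "\<dots> \<le> iter_ratio k * (?u \<bullet> (?G *v ?u))"
  proof (rule mult_left_mono[OF _ iter_ratio_nonneg])
    have "0 \<le> ?u \<bullet> (A *v ?u)" using A_pos_def[of ?u] by (cases "?u = 0") auto
    then show "?u \<bullet> ((?G - A) *v ?u) \<le> ?u \<bullet> (?G *v ?u)"
      by (simp add: matrix_vector_mult_diff_rdistrib inner_diff_right)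
  qed
  also have "?u \<bullet> (?G *v ?u) = iter_g k \<bullet> (matrix_inv ?G *v iter_g k)"
    by (simp add: iter_u_def matrix_vector_mult_uminus_right matrix_inv_mult_vector
        iter_G_invertible inner_commute)
  finally show ?thesis .
qed

lemma iter_G_norm_le_prod:
  "iter_g k \<bullet> (matrix_inv (iter_G k) *v iter_g k)
    \<le> (\<Prod>i<k. iter_ratio i) * (iter_g 0 \<bullet> (matrix_inv (iter_G 0) *v iter_g 0))"
proof (induction k)
  case (Suc k)
  then show ?case
    using iter_G_norm_Suc_le[of k] mult_left_mono[OF Suc.IH iter_ratio_nonneg]
    by (simp add: mult_ac order_trans)
qed simp

lemma iter_G_0_inverse: "matrix_inv (iter_G 0) = (1 / L) *\<^sub>R mat 1"
  using iter_G_invertible[of 0] L_pos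
  by (intro matrix_inv_eqI) (simp_all add: iter_0 scaleR_matrix_vector_assoc[symmetric]
      matrix_vector_mult_scaleR)

lemma iter_ratio_sum_le: "(\<Sum>i<k. iter_ratio i) \<le> CARD('n) * (L / \<mu> - 1)"
proof -
  let ?tr = "\<lambda>i. trace (matrix_inv (iter_G i))"
  have "(\<Sum>i<k. iter_ratio i) \<le> (\<Sum>i<k. L * (?tr (Suc i) - ?tr i))"
    unfolding iter_ratio_def iter_Suc
    by (intro sum_mono sr1_ratio_le_trace[OF symA iter_G_symmetric iter_G_ge_A A_pos_def iter_G_le_L])
  also have "\<dots> = L * (?tr k - ?tr 0)"
    using sum_lessThan_telescope[of ?tr k] by (simp add: sum_distrib_left[symmetric])
  also have "\<dots> \<le> L * (CARD('n) / \<mu> - CARD('n) / L)"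
    using trace_matrix_inv_le[OF mu_pos iter_G_ge_mu] L_pos
    by (simp add: iter_G_0_inverse trace_scaleR trace_I)
  also have "\<dots> = CARD('n) * (L / \<mu> - 1)"
    using L_pos mu_pos by (simp add: field_simps)
  finally show ?thesis .
qed

lemma iter_ratio_prod_le:
  assumes "1 \<le> k" and "k \<le> CARD('n)"
  shows "(\<Prod>i<k. iter_ratio i) \<le> (exp (CARD('n) / k * ln (L / \<mu>)) - 1) ^ k"
proof -
  have "(\<Prod>i<k. iter_ratio i) \<le> ((\<Sum>i<k. iter_ratio i) / k) ^ k"
    using prod_le_arith_mean_power[of "{..<k}" iter_ratio] assms(1) iter_ratio_nonneg
    by (simp add: lessThan_empty_iff)
  also have "\<dots> \<le> (CARD('n) * (L / \<mu> - 1) / k) ^ k"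
    using iter_ratio_sum_le[of k] iter_ratio_nonneg
    by (intro power_mono divide_right_mono) (simp_all add: sum_nonneg)
  also have "\<dots> \<le> (exp (CARD('n) / k * ln (L / \<mu>)) - 1) ^ k"
  proof (intro power_mono)
    have "1 + CARD('n) / k * (L / \<mu> - 1) \<le> (1 + (L / \<mu> - 1)) powr (CARD('n) / k)"
      using assms mu_pos L_pos by (intro Bernoulli_inequality_powr) simp_all
    then show "CARD('n) * (L / \<mu> - 1) / k \<le> exp (CARD('n) / k * ln (L / \<mu>)) - 1"
      using mu_pos L_pos by (simp add: powr_def mult.commute)
    show "0 \<le> CARD('n) * (L / \<mu> - 1) / k"
      using mu_pos mu_le_L by simp
  qed
  finally show ?thesis .
qed

lemma iter_kernel_dim:
  "iter_g k \<noteq> 0 \<Longrightarrow> k \<le> dim {x. (iter_G k - A) *v x = 0}"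
proof (induction k)
  case (Suc k)
  let ?K = "\<lambda>i. {x. (iter_G i - A) *v x = 0}"
  have "iter_g k \<noteq> 0"
    using Suc.prems by (auto simp: iter_g_Suc iter_u_def)
  have "subspace (?K k)"
    by (auto simp: subspace_def matrix_vector_right_distrib matrix_vector_mult_scaleR)
  moreover have "iter_u k \<notin> ?K k"
    using Suc.prems by (simp add: iter_g_Suc_residual)
  ultimately have "dim (?K k) + 1 = dim (insert (iter_u k) (?K k))"
    by (simp add: dim_insert span_eq_iff[THEN iffD2])
  also have "\<dots> \<le> dim (?K (Suc k))"
    using SR1_secant[OF symA iter_G_symmetric iter_G_ge_A]
      SR1_kernel_mono[OF symA iter_G_symmetric iter_G_ge_A]
    by (intro dim_subset) (auto simp: iter_Suc)
  finally show ?case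
    using Suc.IH[OF \<open>iter_g k \<noteq> 0\<close>] by simp
qed simp

lemma iter_g_eq_0: "CARD('n) < k \<Longrightarrow> iter_g k = 0"
  using iter_kernel_dim[of k] dim_subset_UNIV_cart[of "{x. (iter_G k - A) *v x = 0}"] by linarith

lemma iter_A_norm_le:
  "iter_g k \<bullet> (matrix_inv A *v iter_g k) \<le> L / \<mu> * (iter_g k \<bullet> (matrix_inv (iter_G k) *v iter_g k))"
proof -
  let ?g = "iter_g k"
  have G_nonneg: "0 \<le> v \<bullet> (iter_G k *v v)" for v
    using iter_G_ge_mu[of v k] mu_pos by (smt (verit) inner_ge_zero mult_nonneg_nonneg)
  have "?g \<bullet> (matrix_inv A *v ?g) \<le> (?g \<bullet> ?g) / \<mu>"
    by (rule matrix_inv_quad_le[OF mu_pos lower])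
  also have "\<dots> = L / \<mu> * ((?g \<bullet> ?g) / L)"
    using L_pos by simp
  also have "\<dots> \<le> L / \<mu> * (?g \<bullet> (matrix_inv (iter_G k) *v ?g))"
    using matrix_inv_quad_ge[OF iter_G_symmetric G_nonneg iter_G_le_L iter_G_invertible L_pos]
      mu_pos L_pos
    by (intro mult_left_mono) auto
  finally show ?thesis .
qed

lemma iter_G_0_norm_le:
  "iter_g 0 \<bullet> (matrix_inv (iter_G 0) *v iter_g 0) \<le> iter_g 0 \<bullet> (matrix_inv A *v iter_g 0)"
proof -
  have "invertible A"
    using A_pos_def by (rule invertible_if_pos_def)
  moreover have "0 \<le> v \<bullet> (A *v v)" for v
    using lower[of v] mu_pos by (smt (verit) inner_ge_zero mult_nonneg_nonneg)
  ultimately show ?thesis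
    using matrix_inv_quad_ge[OF symA _ upper _ L_pos]
    by (simp add: iter_G_0_inverse scaleR_matrix_vector_assoc[symmetric])
qed

lemma iter_A_norm_bound:
  assumes "1 \<le> k"
  shows "iter_g k \<bullet> (matrix_inv A *v iter_g k)
    \<le> (exp (CARD('n) / k * ln (L / \<mu>)) - 1) ^ k * (L / \<mu>) * (iter_g 0 \<bullet> (matrix_inv A *v iter_g 0))"
proof -
  let ?\<nu>G = "\<lambda>i. iter_g i \<bullet> (matrix_inv (iter_G i) *v iter_g i)"
  let ?E = "exp (CARD('n) / k * ln (L / \<mu>))"
  have "0 \<le> ?\<nu>G 0"
    using L_pos by (simp add: iter_G_0_inverse scaleR_matrix_vector_assoc[symmetric])
  have "1 \<le> ?E" using mu_pos mu_le_L by simp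
  show ?thesis
  proof (cases "k \<le> CARD('n)")
    case True
    have "iter_g k \<bullet> (matrix_inv A *v iter_g k) \<le> L / \<mu> * ?\<nu>G k"
      by (rule iter_A_norm_le)
    also have "\<dots> \<le> L / \<mu> * ((\<Prod>i<k. iter_ratio i) * ?\<nu>G 0)"
      using mu_pos L_pos by (intro mult_left_mono iter_G_norm_le_prod) simp
    also have "\<dots> \<le> L / \<mu> * ((?E - 1) ^ k * (iter_g 0 \<bullet> (matrix_inv A *v iter_g 0)))"
      using iter_ratio_prod_le[OF assms True] iter_G_0_norm_le \<open>0 \<le> ?\<nu>G 0\<close> \<open>1 \<le> ?E\<close>
        mu_pos L_pos iter_ratio_nonneg
      by (intro mult_left_mono mult_mono) (simp_all add: prod_nonneg)
    finally show ?thesis by (simp add: mult_ac)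
  next
    case False
    then show ?thesis
      using iter_g_eq_0[of k] iter_G_0_norm_le \<open>0 \<le> ?\<nu>G 0\<close> \<open>1 \<le> ?E\<close> mu_pos L_pos by simp
  qed
qed

end

theorem theorem2:
  fixes A :: "real^'n^'n" and b x0 :: "real^'n" and \<mu> L :: real and k :: nat
  assumes symA: "transpose A = A"
    and mu_pos: "0 < \<mu>" and muL: "\<mu> \<le> L"
    and lower: "\<And>v. \<mu> * (v \<bullet> v) \<le> v \<bullet> (A *v v)"
    and upper: "\<And>v. v \<bullet> (A *v v) \<le> L * (v \<bullet> v)"
    and k1: "k \<ge> 1"
  shows "lambda_f A b (fst (sr1_iter A b L x0 k))
    \<le> (exp (real CARD('n) / real k * ln (L / \<mu>)) - 1) powr (real k / 2)
       * sqrt (L / \<mu>) * lambda_f A b x0"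
proof -
  interpret sr1_quadratic A b x0 \<mu> L
    using assms by unfold_locales auto
  let ?E = "exp (real CARD('n) / real k * ln (L / \<mu>))"
  have "1 \<le> ?E" using mu_pos muL by simp
  have "lambda_f A b (fst (sr1_iter A b L x0 k)) = sqrt (iter_g k \<bullet> (matrix_inv A *v iter_g k))"
    by (simp add: lambda_f_def iter_g_def iter_x_def)
  also have "\<dots> \<le> sqrt ((?E - 1) ^ k * (L / \<mu>) * (iter_g 0 \<bullet> (matrix_inv A *v iter_g 0)))"
    using iter_A_norm_bound[OF k1] by simp
  also have "\<dots> = sqrt ((?E - 1) ^ k) * sqrt (L / \<mu>) * lambda_f A b x0"
    unfolding real_sqrt_mult by (simp add: lambda_f_def iter_g_def iter_0)
  also have "sqrt ((?E - 1) ^ k) = (?E - 1) powr (real k / 2)"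
    using \<open>1 \<le> ?E\<close> k1 by (simp add: powr_half_sqrt_powr powr_realpow')
  finally show ?thesis .
qed

end
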